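(* Let $\mathbb G$ be a finite (possibly non-abelian) group with operation $+$ and $n\ge1$. Consider the function group-add: Alice has $X\in\mathbb G^n$, Bob has $Y\in\mathbb G^n$, Charlie outputs $Z=X+Y$ (component-wise). For every $p_{XY}$ with full support on $\mathbb G^n\times\mathbb G^n$, any secure protocol satisfies \[H(M_{12}),\ H(M_{23}),\ H(M_{31})\ge n\log|\mathbb G|,\] and $\rho(p_{XY},\text{group-add})\ge n\log|\mathbb G|$.
   Context: Setting: Alice (party 1) holds $X$, Bob (party 2) holds $Y$, $(X,Y)\sim p_{XY}$ on finite sets; Charlie (party 3) has no input and outputs $Z$, which should equal $f(X,Y)$ for the deterministic function $f$. In a protocol the parties, each with private randomness, exchange messages over multiple rounds on three pairwise private links, each message a codeword of a prefix-free code determined by previous messages on that link; the protocol terminates with probability 1 and may depend on $p_{XY}$. $M_{12},M_{23},M_{31}$ are the final transcripts on the Alice–Bob, Bob–Charlie, Charlie–Alice links; the view $V_i$ of party $i$ consists of the transcripts on its two links plus its input (Alice, Bob) or output (Charlie). A secure protocol satisfies correctness (Charlie outputs $f(x,y)$ on inputs $x,y$) and privacy (Markov chains $(M_{12},M_{31})-X-(Y,Z)$, $(M_{12},M_{23})-Y-(X,Z)$, $(M_{23},M_{31})-Z-(X,Y)$). $\rho(p_{XY},f)=\inf H(V_1,V_2,V_3|X,Y)$ over all secure protocols for $f$ with input distribution $p_{XY}$. Logs base 2. *)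

theory Defs
  imports "HOL-Probability.Probability"
begin

text \<open>Parties: 1 = Alice (input x), 2 = Bob (input y), 3 = Charlie (no input, output z).  On each link, in each round, the link is either active
  (both endpoints exchange one message in each direction) or silent; whether it is
  active is determined by the previous history of that link (known to both endpoints).
  Private randomness is modelled by behavioural strategies: in each round a party draws
  its outgoing messages from a distribution depending only on its current view.\<close>

type_synonym msg = "bool list"
type_synonym lentry = "(msg \<times> msg) option"
type_synonym lhist = "lentry list"
type_synonym rnd = "lentry \<times> lentry \<times> lentry"   \<comment> \<open>entries on links 12, 23, 31\<close>

text \<open>Orientation of message pairs: link 12 = (Alice to Bob, Bob to Alice);
  link 23 = (Bob to Charlie, Charlie to Bob); link 31 = (Charlie to Alice, Alice to Charlie).\<close>

datatype link = L12 | L23 | L31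

record ('x, 'y, 'z) protocol =
  p_act :: "link \<Rightarrow> lhist \<Rightarrow> bool"
  p_alice :: "'x \<Rightarrow> lhist \<Rightarrow> lhist \<Rightarrow> (msg \<times> msg) pmf"
    \<comment> \<open>view: input, history of link 12, history of link 31; output: (to Bob, to Charlie)\<close>
  p_bob :: "'y \<Rightarrow> lhist \<Rightarrow> lhist \<Rightarrow> (msg \<times> msg) pmf"
    \<comment> \<open>view: input, history of link 12, history of link 23; output: (to Alice, to Charlie)\<close>
  p_charlie :: "lhist \<Rightarrow> lhist \<Rightarrow> (msg \<times> msg) pmf"
    \<comment> \<open>view: history of link 23, history of link 31; output: (to Bob, to Alice)\<close>
  p_out :: "(msg \<times> msg) list \<Rightarrow> (msg \<times> msg) list \<Rightarrow> 'z"

definition h12 :: "rnd list \<Rightarrow> lhist" where "h12 r = map fst r"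
definition h23 :: "rnd list \<Rightarrow> lhist" where "h23 r = map (fst \<circ> snd) r"
definition h31 :: "rnd list \<Rightarrow> lhist" where "h31 r = map (snd \<circ> snd) r"

definition tr :: "lhist \<Rightarrow> (msg \<times> msg) list" where
  "tr h = [the e. e \<leftarrow> h, e \<noteq> None]"

definition M12 :: "rnd list \<Rightarrow> (msg \<times> msg) list" where "M12 r = tr (h12 r)"
definition M23 :: "rnd list \<Rightarrow> (msg \<times> msg) list" where "M23 r = tr (h23 r)"
definition M31 :: "rnd list \<Rightarrow> (msg \<times> msg) list" where "M31 r = tr (h31 r)"

definition round_prob :: "('x, 'y, 'z) protocol \<Rightarrow> 'x \<Rightarrow> 'y \<Rightarrow> rnd list \<Rightarrow> rnd \<Rightarrow> real" where
  "round_prob P x y r e =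
    (case e of (e12, e23, e31) \<Rightarrow>
      if (e12 = None \<longleftrightarrow> \<not> p_act P L12 (h12 r)) \<and> (e23 = None \<longleftrightarrow> \<not> p_act P L23 (h23 r))
         \<and> (e31 = None \<longleftrightarrow> \<not> p_act P L31 (h31 r))
      then measure_pmf.prob (p_alice P x (h12 r) (h31 r))
             {(u, v). (\<forall>p. e12 = Some p \<longrightarrow> u = fst p) \<and> (\<forall>p. e31 = Some p \<longrightarrow> v = snd p)}
         * measure_pmf.prob (p_bob P y (h12 r) (h23 r))
             {(u, v). (\<forall>p. e12 = Some p \<longrightarrow> u = snd p) \<and> (\<forall>p. e23 = Some p \<longrightarrow> v = fst p)}
         * measure_pmf.prob (p_charlie P (h23 r) (h31 r))
             {(u, v). (\<forall>p. e23 = Some p \<longrightarrow> u = snd p) \<and> (\<forall>p. e31 = Some p \<longrightarrow> v = fst p)}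
      else 0)"

definition run_prob :: "('x, 'y, 'z) protocol \<Rightarrow> 'x \<Rightarrow> 'y \<Rightarrow> rnd list \<Rightarrow> real" where
  "run_prob P x y r = (\<Prod>k<length r. round_prob P x y (take k r) (r ! k))"

definition halted :: "('x, 'y, 'z) protocol \<Rightarrow> rnd list \<Rightarrow> bool" where
  "halted P r \<longleftrightarrow> (\<forall>k. \<not> p_act P L12 (h12 r @ replicate k None)
      \<and> \<not> p_act P L23 (h23 r @ replicate k None) \<and> \<not> p_act P L31 (h31 r @ replicate k None))"

definition complete :: "('x, 'y, 'z) protocol \<Rightarrow> rnd list \<Rightarrow> bool" where
  "complete P r \<longleftrightarrow> halted P r \<and> (\<forall>k<length r. \<not> halted P (take k r))"

definition terminates :: "('x \<times> 'y) pmf \<Rightarrow> ('x, 'y, 'z) protocol \<Rightarrow> bool" where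
  "terminates pXY P \<longleftrightarrow> (\<forall>x y. pmf pXY (x, y) > 0 \<longrightarrow>
     (\<integral>\<^sup>+ r. ennreal (if complete P r then run_prob P x y r else 0) \<partial>count_space UNIV) = 1)"

text \<open>Joint distribution of inputs and the complete execution (meaningful when the protocol
  terminates with probability 1).\<close>
definition joint :: "('x \<times> 'y) pmf \<Rightarrow> ('x, 'y, 'z) protocol \<Rightarrow> ('x \<times> 'y \<times> rnd list) pmf" where
  "joint pXY P = embed_pmf (\<lambda>(x, y, r). pmf pXY (x, y) * (if complete P r then run_prob P x y r else 0))"

definition outZ :: "('x, 'y, 'z) protocol \<Rightarrow> rnd list \<Rightarrow> 'z" where
  "outZ P r = p_out P (M23 r) (M31 r)"

definition correct :: "('x \<times> 'y) pmf \<Rightarrow> ('x \<Rightarrow> 'y \<Rightarrow> 'z) \<Rightarrow> ('x, 'y, 'z) protocol \<Rightarrow> bool" where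
  "correct pXY f P \<longleftrightarrow> (\<forall>x y r. pmf pXY (x, y) > 0 \<longrightarrow> complete P r \<longrightarrow> run_prob P x y r > 0
      \<longrightarrow> outZ P r = f x y)"

definition markov_chain :: "('a \<times> 'b \<times> 'c) pmf \<Rightarrow> bool" where
  "markov_chain J \<longleftrightarrow> (\<forall>a b c.
     pmf J (a, b, c) * pmf (map_pmf (\<lambda>(a, b, c). b) J) b
     = pmf (map_pmf (\<lambda>(a, b, c). (a, b)) J) (a, b) * pmf (map_pmf (\<lambda>(a, b, c). (b, c)) J) (b, c))"

definition is_private :: "('x \<times> 'y) pmf \<Rightarrow> ('x, 'y, 'z) protocol \<Rightarrow> bool" where
  "is_private pXY P \<longleftrightarrow>
     markov_chain (map_pmf (\<lambda>(x, y, r). ((M12 r, M31 r), x, (y, outZ P r))) (joint pXY P)) \<and>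
     markov_chain (map_pmf (\<lambda>(x, y, r). ((M12 r, M23 r), y, (x, outZ P r))) (joint pXY P)) \<and>
     markov_chain (map_pmf (\<lambda>(x, y, r). ((M23 r, M31 r), outZ P r, (x, y))) (joint pXY P))"

definition secure :: "('x \<times> 'y) pmf \<Rightarrow> ('x \<Rightarrow> 'y \<Rightarrow> 'z) \<Rightarrow> ('x, 'y, 'z) protocol \<Rightarrow> bool" where
  "secure pXY f P \<longleftrightarrow> terminates pXY P \<and> correct pXY f P \<and> is_private pXY P"

definition entropy2 :: "'a pmf \<Rightarrow> ennreal" where
  "entropy2 p = (\<integral>\<^sup>+ a. ennreal (pmf p a * log 2 (1 / pmf p a)) \<partial>count_space UNIV)"

definition cond_entropy2 :: "('a \<times> 'b) pmf \<Rightarrow> ennreal" where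
  "cond_entropy2 J = (\<integral>\<^sup>+ ab. ennreal (pmf J ab * log 2 (pmf (map_pmf snd J) (snd ab) / pmf J ab))
      \<partial>count_space UNIV)"

definition H_M12 :: "('x \<times> 'y) pmf \<Rightarrow> ('x, 'y, 'z) protocol \<Rightarrow> ennreal" where
  "H_M12 pXY P = entropy2 (map_pmf (\<lambda>(x, y, r). M12 r) (joint pXY P))"
definition H_M23 :: "('x \<times> 'y) pmf \<Rightarrow> ('x, 'y, 'z) protocol \<Rightarrow> ennreal" where
  "H_M23 pXY P = entropy2 (map_pmf (\<lambda>(x, y, r). M23 r) (joint pXY P))"
definition H_M31 :: "('x \<times> 'y) pmf \<Rightarrow> ('x, 'y, 'z) protocol \<Rightarrow> ennreal" where
  "H_M31 pXY P = entropy2 (map_pmf (\<lambda>(x, y, r). M31 r) (joint pXY P))"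

definition views_entropy :: "('x \<times> 'y) pmf \<Rightarrow> ('x, 'y, 'z) protocol \<Rightarrow> ennreal" where
  "views_entropy pXY P = cond_entropy2 (map_pmf (\<lambda>(x, y, r).
      (((x, M12 r, M31 r), (y, M12 r, M23 r), (M23 r, M31 r, outZ P r)), (x, y))) (joint pXY P))"

definition rho :: "('x \<times> 'y) pmf \<Rightarrow> ('x \<Rightarrow> 'y \<Rightarrow> 'z) \<Rightarrow> ennreal" where
  "rho pXY f = (INF P \<in> {P. secure pXY f P}. views_entropy pXY P)"

end

theory Submission
  imports Defs "HOL-Library.Cardinality"
begin

text \<open>Privacy against each party, with full support, makes the law of the pair of transcripts a
  party sees depend only on that party's own input or output. As rows and columns of a Latin
  square such as \<open>(x, y) \<mapsto> x + y\<close> are bijections, every single transcript then has the same law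
  for all inputs. Fix \<open>x\<close> and a value \<open>m\<close> of \<open>M23\<close>, and let \<open>y\<close> range over all \<open>N\<close> inputs: the
  events \<open>M23 = m\<close> have equal probability and Alice's view \<open>(M12, M31)\<close> maps them to disjoint
  events of one common law, because the three transcripts of a complete run determine the run and
  hence Charlie's output. So \<open>N \<cdot> P(M23 = m) \<le> 1\<close> and \<open>H(M23) \<ge> log N\<close>. For \<open>M12\<close> one moves
  along a fibre of the output instead, using that a run possible on inputs \<open>(x, y)\<close> and
  \<open>(x', y')\<close> is possible on \<open>(x, y')\<close>, as round probabilities factor into the parties' parts.
  The views determine \<open>M12\<close>, which bounds their entropy given the inputs.\<close>

section \<open>Executions and transcripts\<close>

definition entry :: "link \<Rightarrow> rnd \<Rightarrow> lentry" where
  "entry l = (case l of L12 \<Rightarrow> fst | L23 \<Rightarrow> fst \<circ> snd | L31 \<Rightarrow> snd \<circ> snd)"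

definition hist :: "link \<Rightarrow> rnd list \<Rightarrow> lhist" where
  "hist l = map (entry l)"

lemma hist_links: "hist L12 = h12" "hist L23 = h23" "hist L31 = h31"
  by (simp_all add: fun_eq_iff hist_def entry_def h12_def h23_def h31_def)

lemma rnd_eq_iff_entry_eq: "e = e' \<longleftrightarrow> (\<forall>l. entry l e = entry l e')"
  by (metis entry_def link.simps(7-9) o_apply prod_eq_iff)

lemma round_prob_nonneg: "round_prob P x y h e \<ge> 0"
  unfolding round_prob_def by (auto split: prod.splits)

lemma run_prob_nonneg: "run_prob P x y r \<ge> 0"
  unfolding run_prob_def by (auto intro!: prod_nonneg round_prob_nonneg)

lemma round_prob_pos_imp_entry:
  assumes "round_prob P x y h e > 0"
  shows "entry l e = None \<longleftrightarrow> \<not> p_act P l (hist l h)"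
  using assms by (cases e; cases l) (auto simp: round_prob_def entry_def hist_links split: if_splits)

lemma round_prob_pos_mix:
  assumes "round_prob P x y h e > 0" "round_prob P x' y' h e > 0"
  shows "round_prob P x y' h e > 0"
  using assms by (cases e) (auto simp: round_prob_def zero_less_mult_iff split: if_splits)

lemma round_prob_pos_if_run_prob_pos:
  assumes "run_prob P x y r > 0" "k < length r"
  shows "round_prob P x y (take k r) (r ! k) > 0"
proof (rule ccontr)
  assume "\<not> round_prob P x y (take k r) (r ! k) > 0"
  then have "round_prob P x y (take k r) (r ! k) = 0"
    using round_prob_nonneg[of P x y "take k r" "r ! k"] by linarith
  then have "run_prob P x y r = 0"
    unfolding run_prob_def using assms(2) by (intro prod_zero) auto
  then show False using assms(1) by simp
qed

lemma run_prob_pos_mix: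
  assumes "run_prob P x y r > 0" "run_prob P x' y' r > 0"
  shows "run_prob P x y' r > 0"
  unfolding run_prob_def
  using round_prob_pos_mix[OF round_prob_pos_if_run_prob_pos[OF assms(1)]
      round_prob_pos_if_run_prob_pos[OF assms(2)]]
  by (auto intro!: prod_pos)

definition link_consistent :: "(lhist \<Rightarrow> bool) \<Rightarrow> lhist \<Rightarrow> bool" where
  "link_consistent act h \<longleftrightarrow> (\<forall>k<length h. h ! k = None \<longleftrightarrow> \<not> act (take k h))"

lemma tr_split_at_Some:
  assumes "n < length h" "h ! n = Some a"
  shows "tr h = tr (take n h) @ a # tr (drop (Suc n) h)"
proof -
  have "tr h = tr (take n h @ h ! n # drop (Suc n) h)"
    using id_take_nth_drop[OF assms(1)] by (rule arg_cong)
  then show ?thesis using assms(2) by (simp add: tr_def)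
qed

lemma take_eq_if_tr_eq:
  assumes h: "link_consistent act h" and h': "link_consistent act h'"
    and tr_eq: "tr h = tr h'" and "n \<le> length h" "n \<le> length h'"
  shows "take n h = take n h'"
  using assms(4,5)
proof (induction n)
  case 0
  then show ?case by simp
next
  case (Suc n)
  then have IH: "take n h = take n h'" and n: "n < length h" "n < length h'" by auto
  have act_iff: "h ! n = None \<longleftrightarrow> h' ! n = None"
    using h h' n IH unfolding link_consistent_def by metis
  have "h ! n = h' ! n"
  proof (cases "h ! n")
    case None
    then show ?thesis using act_iff by simp
  next
    case (Some a)
    then obtain b where b: "h' ! n = Some b" using act_iff by auto
    have "a = b"
      using tr_eq IH tr_split_at_Some[OF n(1) Some] tr_split_at_Some[OF n(2) b] by simp
    then show ?thesis using Some b by simp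
  qed
  then show ?case using IH n by (simp add: take_Suc_conv_app_nth)
qed

lemma link_consistent_hist:
  assumes "run_prob P x y r > 0"
  shows "link_consistent (p_act P l) (hist l r)"
  unfolding link_consistent_def
proof (intro allI impI)
  fix k assume "k < length (hist l r)"
  then have k: "k < length r" by (simp add: hist_def)
  have "hist l r ! k = entry l (r ! k)" "take k (hist l r) = hist l (take k r)"
    using k by (simp_all add: hist_def take_map)
  then show "hist l r ! k = None \<longleftrightarrow> \<not> p_act P l (take k (hist l r))"
    using round_prob_pos_imp_entry[OF round_prob_pos_if_run_prob_pos[OF assms k]] by simp
qed

lemma complete_run_eq_if_tr_eq:
  assumes complete: "complete P r" "complete P r'"
    and pos: "run_prob P x y r > 0" "run_prob P x' y' r' > 0"
    and tr_eq: "\<And>l. tr (hist l r) = tr (hist l r')"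
  shows "r = r'"
proof -
  define n where "n = min (length r) (length r')"
  have "take n (hist l r) = take n (hist l r')" for l
    using take_eq_if_tr_eq[OF link_consistent_hist[OF pos(1)] link_consistent_hist[OF pos(2)] tr_eq]
    by (simp add: n_def hist_def)
  then have entries: "map (entry l) (take n r) = map (entry l) (take n r')" for l
    by (simp add: hist_def take_map)
  have prefix: "take n r = take n r'"
  proof (rule nth_equalityI)
    show "length (take n r) = length (take n r')" by (simp add: n_def)
  next
    fix i assume "i < length (take n r)"
    then have "entry l (take n r ! i) = entry l (take n r' ! i)" for l
      using arg_cong[OF entries[of l], of "\<lambda>es. es ! i"] by (simp add: n_def)
    then show "take n r ! i = take n r' ! i" by (simp add: rnd_eq_iff_entry_eq)
  qed
  have "length r = length r'"
  proof (rule ccontr)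
    assume "length r \<noteq> length r'"
    then consider "length r < length r'" | "length r' < length r" by linarith
    then show False
    proof cases
      case 1
      then have "take (length r) r' = r" using prefix by (simp add: n_def)
      then show False using complete 1 unfolding complete_def by metis
    next
      case 2
      then have "take (length r') r = r'" using prefix by (simp add: n_def)
      then show False using complete 2 unfolding complete_def by metis
    qed
  qed
  then show ?thesis using prefix by (simp add: n_def)
qed

section \<open>Distributions and entropy\<close>

lemma embed_pmf_pmf: "embed_pmf (pmf p) = p"
  using type_definition.Rep_inverse[OF td_pmf_embed_pmf] .

lemma pmf_bind_inj_tag:
  assumes inj: "inj (\<lambda>(v, u). g v u)"
  shows "pmf (bind_pmf pU (\<lambda>u. map_pmf (\<lambda>v. g v u) (L u))) (g v u) = pmf pU u * pmf (L u) v"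
proof -
  have "pmf (map_pmf (\<lambda>v. g v w) (L w)) (g v u) = indicator {u} w * pmf (L u) v" for w
  proof (cases "w = u")
    case True
    have "inj (\<lambda>v. g v u)" using inj by (auto simp: inj_def)
    then show ?thesis using True pmf_map_inj'[of "\<lambda>v. g v u" "L u" v] by simp
  next
    case False
    then have "g v u \<notin> (\<lambda>v. g v w) ` set_pmf (L w)" using inj by (auto simp: inj_def)
    then show ?thesis using False by (simp add: pmf_map_outside)
  qed
  then have "pmf (bind_pmf pU (\<lambda>u. map_pmf (\<lambda>v. g v u) (L u))) (g v u)
      = (\<integral>w. indicator {u} w * pmf (L u) v \<partial>pU)"
    by (simp only: pmf_bind)
  also have "\<dots> = pmf pU u * pmf (L u) v"
    by (simp add: measure_pmf_single)
  finally show ?thesis .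
qed

text \<open>With full support, the Markov chain \<open>V - s(U) - t(U)\<close> forces the law of \<open>V\<close> given \<open>U = u\<close>
  to be the conditional law given \<open>s(U) = s(u)\<close>, as \<open>(s, t)\<close> determines \<open>u\<close>.\<close>

lemma markov_chain_cond_law_eq:
  fixes pU :: "'u pmf" and K :: "'u \<Rightarrow> 'r pmf"
  assumes full: "set_pmf pU = UNIV" and inj: "inj (\<lambda>u. (s u, t u))"
    and mc: "markov_chain (bind_pmf pU (\<lambda>u. map_pmf (\<lambda>r. (V r, s u, t u)) (K u)))"
    and "s u = s u'"
  shows "map_pmf V (K u) = map_pmf V (K u')"
proof -
  define L where "L u = map_pmf V (K u)" for u
  define J where "J = bind_pmf pU (\<lambda>u. map_pmf (\<lambda>v. (v, s u, t u)) (L u))"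
  have mcJ: "markov_chain J"
    using mc by (simp add: J_def L_def map_pmf_comp)
  have inj_tag: "inj (\<lambda>(v, u). (v, s u, t u))"
    using inj by (auto simp: inj_def)
  have pmf_J: "pmf J (a, s u, t u) = pmf pU u * pmf (L u) a" for a u
    unfolding J_def using pmf_bind_inj_tag[OF inj_tag] .
  have pmf_B: "pmf (map_pmf (\<lambda>(a, b, c). b) J) (s u) > 0" for u
  proof -
    have "map_pmf (\<lambda>(a, b, c). b) J = map_pmf s pU"
      unfolding J_def map_bind_pmf by (simp add: map_pmf_comp map_pmf_def[of s])
    then show ?thesis using full by (simp add: pmf_positive)
  qed
  have pmf_BC: "pmf (map_pmf (\<lambda>(a, b, c). (b, c)) J) (s u, t u) = pmf pU u" for u
  proof -
    have "map_pmf (\<lambda>(a, b, c). (b, c)) J = map_pmf (\<lambda>u. (s u, t u)) pU"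
      unfolding J_def map_bind_pmf by (simp add: map_pmf_comp map_pmf_def[of "\<lambda>u. (s u, t u)"])
    then show ?thesis using pmf_map_inj'[OF inj] by simp
  qed
  define F where "F b a = pmf (map_pmf (\<lambda>(a, b, c). (a, b)) J) (a, b)
      / pmf (map_pmf (\<lambda>(a, b, c). b) J) b" for b a
  have "pmf (L u) a = F (s u) a" for u a
  proof -
    have "pmf J (a, s u, t u) * pmf (map_pmf (\<lambda>(a, b, c). b) J) (s u)
        = pmf (map_pmf (\<lambda>(a, b, c). (a, b)) J) (a, s u)
          * pmf (map_pmf (\<lambda>(a, b, c). (b, c)) J) (s u, t u)"
      using mcJ unfolding markov_chain_def by blast
    then have "pmf pU u * pmf (L u) a * pmf (map_pmf (\<lambda>(a, b, c). b) J) (s u)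
        = pmf (map_pmf (\<lambda>(a, b, c). (a, b)) J) (a, s u) * pmf pU u"
      by (simp only: pmf_J pmf_BC)
    moreover have "pmf pU u > 0" using full by (simp add: pmf_positive)
    ultimately show ?thesis using pmf_B[of u] unfolding F_def by (simp add: field_simps)
  qed
  then show ?thesis using \<open>s u = s u'\<close> unfolding L_def by (auto intro: pmf_eqI)
qed

text \<open>The events \<open>V ` (set_pmf (K i) \<inter> S)\<close> are disjoint under the common law of \<open>V\<close>.\<close>

lemma card_mult_prob_le_1:
  fixes K :: "'i::finite \<Rightarrow> 'r pmf"
  assumes same_law: "\<And>i j. map_pmf V (K i) = map_pmf V (K j)"
    and separates: "\<And>i j r r'. r \<in> set_pmf (K i) \<inter> S \<Longrightarrow> r' \<in> set_pmf (K j) \<inter> S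
      \<Longrightarrow> V r = V r' \<Longrightarrow> i = j"
    and prob: "\<And>i. measure_pmf.prob (K i) S = p"
  shows "real CARD('i) * p \<le> 1"
proof -
  fix i0 :: 'i
  define G where "G = map_pmf V (K i0)"
  define C where "C i = V ` (set_pmf (K i) \<inter> S)" for i
  have le: "p \<le> measure_pmf.prob G (C i)" for i
  proof -
    have "p = measure_pmf.prob (K i) (S \<inter> set_pmf (K i))"
      by (simp add: prob[symmetric] measure_Int_set_pmf)
    also have "\<dots> \<le> measure_pmf.prob (K i) (V -` C i)"
      by (rule measure_pmf.finite_measure_mono) (auto simp: C_def)
    also have "\<dots> = measure_pmf.prob G (C i)"
      unfolding G_def same_law[of i0 i] by simp
    finally show ?thesis .
  qed
  have "disjoint_family C"
    unfolding disjoint_family_on_def C_def using separates by blast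
  then have "(\<Sum>i\<in>UNIV. measure_pmf.prob G (C i)) = measure_pmf.prob G (\<Union>i. C i)"
    by (intro measure_pmf.finite_measure_finite_Union[symmetric]) auto
  moreover have "(\<Sum>i::'i\<in>UNIV. p) \<le> (\<Sum>i\<in>UNIV. measure_pmf.prob G (C i))"
    by (rule sum_mono) (rule le)
  ultimately have "(\<Sum>i::'i\<in>UNIV. p) \<le> measure_pmf.prob G (\<Union>i. C i)"
    by simp
  then show ?thesis by (simp add: order_trans[OF _ measure_pmf.prob_le_1])
qed

lemma nn_integral_pmf_log_ge:
  assumes N: "N \<ge> 1" and g: "\<And>a. pmf p a > 0 \<Longrightarrow> N \<le> g a"
  shows "ennreal (log 2 N) \<le> (\<integral>\<^sup>+a. ennreal (pmf p a * log 2 (g a)) \<partial>count_space UNIV)"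
proof -
  have "ennreal (log 2 N) = (\<integral>\<^sup>+a. ennreal (pmf p a) \<partial>count_space UNIV) * ennreal (log 2 N)"
    by (simp add: nn_integral_pmf measure_pmf.emeasure_space_1[simplified])
  also have "\<dots> = (\<integral>\<^sup>+a. ennreal (pmf p a) * ennreal (log 2 N) \<partial>count_space UNIV)"
    by (rule nn_integral_multc[symmetric]) simp
  also have "\<dots> \<le> (\<integral>\<^sup>+a. ennreal (pmf p a * log 2 (g a)) \<partial>count_space UNIV)"
  proof (rule nn_integral_mono)
    fix a
    show "ennreal (pmf p a) * ennreal (log 2 N) \<le> ennreal (pmf p a * log 2 (g a))"
    proof (cases "pmf p a > 0")
      case True
      then have "pmf p a * log 2 N \<le> pmf p a * log 2 (g a)"
        using g[OF True] N by simp
      then show ?thesis using N by (simp add: ennreal_mult[symmetric] ennreal_leI)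
    next
      case False
      then have "pmf p a = 0" using pmf_nonneg[of p a] by linarith
      then show ?thesis by simp
    qed
  qed
  finally show ?thesis .
qed

lemma entropy2_ge_log:
  assumes "N \<ge> 1" and "\<And>a. N * pmf p a \<le> 1"
  shows "ennreal (log 2 N) \<le> entropy2 p"
  unfolding entropy2_def using assms
  by (intro nn_integral_pmf_log_ge) (auto simp: le_divide_eq)

lemma cond_entropy2_ge_log:
  assumes "N \<ge> 1" and "\<And>ab. N * pmf J ab \<le> pmf (map_pmf snd J) (snd ab)"
  shows "ennreal (log 2 N) \<le> cond_entropy2 J"
  unfolding cond_entropy2_def using assms
  by (intro nn_integral_pmf_log_ge) (auto simp: le_divide_eq)

lemma pmf_map_le_pmf_map_factor:
  assumes "\<And>r. h (W r) = V r"
  shows "pmf (map_pmf W p) w \<le> pmf (map_pmf V p) (h w)"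
  unfolding pmf_map using assms
  by (intro measure_pmf.finite_measure_mono) auto

text \<open>The law of the complete execution on inputs \<open>x, y\<close>; it is only meaningful when the protocol
  terminates there, otherwise \<open>embed_pmf\<close> returns an unspecified distribution.\<close>

definition run_pmf :: "('x, 'y, 'z) protocol \<Rightarrow> 'x \<Rightarrow> 'y \<Rightarrow> rnd list pmf" where
  "run_pmf P x y = embed_pmf (\<lambda>r. if complete P r then run_prob P x y r else 0)"

lemma pmf_run_pmf:
  assumes "terminates pXY P" "pmf pXY (x, y) > 0"
  shows "pmf (run_pmf P x y) r = (if complete P r then run_prob P x y r else 0)"
  using assms unfolding run_pmf_def terminates_def
  by (intro pmf_embed_pmf) (auto simp: run_prob_nonneg)

lemma set_pmf_run_pmf:
  assumes "terminates pXY P" "pmf pXY (x, y) > 0"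
  shows "r \<in> set_pmf (run_pmf P x y) \<longleftrightarrow> complete P r \<and> run_prob P x y r > 0"
  using pmf_run_pmf[OF assms, of r] run_prob_nonneg[of P x y r]
  by (auto simp: set_pmf_eq')

lemma joint_eq_bind_run_pmf:
  assumes "terminates pXY P"
  shows "joint pXY P = bind_pmf pXY (\<lambda>u. map_pmf (\<lambda>r. (fst u, snd u, r)) (run_pmf P (fst u) (snd u)))"
    (is "_ = ?B")
proof -
  have "pmf pXY (x, y) * (if complete P r then run_prob P x y r else 0) = pmf ?B (x, y, r)" for x y r
  proof -
    have "pmf ?B (x, y, r) = pmf pXY (x, y) * pmf (run_pmf P x y) r"
      using pmf_bind_inj_tag[of "\<lambda>r u. (fst u, snd u, r)" pXY "\<lambda>u. run_pmf P (fst u) (snd u)" r "(x, y)"]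
      by (simp add: inj_def)
    moreover have "pmf pXY (x, y) = 0" if "\<not> pmf pXY (x, y) > 0"
      using that pmf_nonneg[of pXY "(x, y)"] by linarith
    ultimately show ?thesis
      using pmf_run_pmf[OF assms] by (cases "pmf pXY (x, y) > 0") auto
  qed
  then have "(\<lambda>(x, y, r). pmf pXY (x, y) * (if complete P r then run_prob P x y r else 0)) = pmf ?B"
    by auto
  then show ?thesis unfolding joint_def by (simp add: embed_pmf_pmf)
qed

section \<open>Secure protocols for Latin squares\<close>

locale secure_latin_square_protocol =
  fixes pXY :: "('x::finite \<times> 'y::finite) pmf" and f :: "'x \<Rightarrow> 'y \<Rightarrow> 'z"
    and P :: "('x, 'y, 'z) protocol"
  assumes full_support: "set_pmf pXY = UNIV"
    and secure: "secure pXY f P"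
    and bij_row: "bij (f x)"
    and bij_col: "bij (\<lambda>x. f x y)"
begin

lemma pmf_pXY_pos: "pmf pXY u > 0"
  using full_support by (simp add: pmf_positive)

lemma set_pmf_run: "r \<in> set_pmf (run_pmf P x y) \<longleftrightarrow> complete P r \<and> run_prob P x y r > 0"
  using secure pmf_pXY_pos unfolding secure_def by (intro set_pmf_run_pmf) auto

lemma outZ_run: "r \<in> set_pmf (run_pmf P x y) \<Longrightarrow> outZ P r = f x y"
  using secure pmf_pXY_pos by (auto simp: secure_def correct_def set_pmf_run)

lemma map_joint:
  "map_pmf h (joint pXY P)
    = bind_pmf pXY (\<lambda>u. map_pmf (\<lambda>r. h (fst u, snd u, r)) (run_pmf P (fst u) (snd u)))"
  using secure unfolding secure_def
  by (simp add: joint_eq_bind_run_pmf map_bind_pmf map_pmf_comp)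

lemma outZ_joint: "(x, y, r) \<in> set_pmf (joint pXY P) \<Longrightarrow> outZ P r = f x y"
  using secure unfolding secure_def by (auto simp: joint_eq_bind_run_pmf outZ_run)

lemma map_joint_const:
  assumes "\<And>x y. map_pmf V (run_pmf P x y) = Q"
  shows "map_pmf (\<lambda>(x, y, r). V r) (joint pXY P) = Q"
  by (simp add: map_joint assms)

lemma law_eq_if_markov_chain:
  assumes mc: "markov_chain (map_pmf (\<lambda>(x, y, r). (V r, s x y, t x y)) (joint pXY P))"
    and inj: "inj (\<lambda>(x, y). (s x y, t x y))" and "s x y = s x' y'"
  shows "map_pmf V (run_pmf P x y) = map_pmf V (run_pmf P x' y')"
proof -
  have "markov_chain (bind_pmf pXY (\<lambda>u. map_pmf (\<lambda>r. (V r, case_prod s u, case_prod t u))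
      (case_prod (run_pmf P) u)))"
    using mc by (simp add: map_joint case_prod_beta)
  from markov_chain_cond_law_eq[OF full_support _ this, of "(x, y)" "(x', y')"]
  show ?thesis using inj assms(3) by (simp add: split_beta')
qed

lemma law_M12_M31_indep_Bob:
  "map_pmf (\<lambda>r. (M12 r, M31 r)) (run_pmf P x y) = map_pmf (\<lambda>r. (M12 r, M31 r)) (run_pmf P x y')"
proof (rule law_eq_if_markov_chain[where s="\<lambda>x y. x" and t="\<lambda>x y. (y, f x y)"])
  have "map_pmf (\<lambda>(x, y, r). ((M12 r, M31 r), x, y, outZ P r)) (joint pXY P)
      = map_pmf (\<lambda>(x, y, r). ((M12 r, M31 r), x, y, f x y)) (joint pXY P)"
    by (rule map_pmf_cong) (auto dest: outZ_joint)
  then show "markov_chain (map_pmf (\<lambda>(x, y, r). ((M12 r, M31 r), x, y, f x y)) (joint pXY P))"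
    using secure by (simp add: secure_def is_private_def)
qed (auto simp: inj_def)

lemma law_M12_M23_indep_Alice:
  "map_pmf (\<lambda>r. (M12 r, M23 r)) (run_pmf P x y) = map_pmf (\<lambda>r. (M12 r, M23 r)) (run_pmf P x' y)"
proof (rule law_eq_if_markov_chain[where s="\<lambda>x y. y" and t="\<lambda>x y. (x, f x y)"])
  have "map_pmf (\<lambda>(x, y, r). ((M12 r, M23 r), y, x, outZ P r)) (joint pXY P)
      = map_pmf (\<lambda>(x, y, r). ((M12 r, M23 r), y, x, f x y)) (joint pXY P)"
    by (rule map_pmf_cong) (auto dest: outZ_joint)
  then show "markov_chain (map_pmf (\<lambda>(x, y, r). ((M12 r, M23 r), y, x, f x y)) (joint pXY P))"
    using secure by (simp add: secure_def is_private_def)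
qed (auto simp: inj_def)

lemma law_M23_M31_indep_inputs:
  assumes "f x y = f x' y'"
  shows "map_pmf (\<lambda>r. (M23 r, M31 r)) (run_pmf P x y) = map_pmf (\<lambda>r. (M23 r, M31 r)) (run_pmf P x' y')"
proof (rule law_eq_if_markov_chain[where s=f and t="\<lambda>x y. (x, y)"])
  have "map_pmf (\<lambda>(x, y, r). ((M23 r, M31 r), outZ P r, x, y)) (joint pXY P)
      = map_pmf (\<lambda>(x, y, r). ((M23 r, M31 r), f x y, x, y)) (joint pXY P)"
    by (rule map_pmf_cong) (auto dest: outZ_joint)
  then show "markov_chain (map_pmf (\<lambda>(x, y, r). ((M23 r, M31 r), f x y, x, y)) (joint pXY P))"
    using secure by (simp add: secure_def is_private_def)
qed (use assms in \<open>auto simp: inj_def\<close>)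

lemma law_M12: "map_pmf M12 (run_pmf P x y) = map_pmf M12 (run_pmf P x' y')"
  using arg_cong[OF law_M12_M31_indep_Bob[of x y y'], of "map_pmf fst"]
    arg_cong[OF law_M12_M23_indep_Alice[of x y' x'], of "map_pmf fst"]
  by (simp add: map_pmf_comp)

lemma law_M23: "map_pmf M23 (run_pmf P x y) = map_pmf M23 (run_pmf P x' y')"
proof -
  obtain x'' where x'': "f x'' y = f x' y'"
    using bij_col[of y] by (metis bij_pointE)
  show ?thesis
    using arg_cong[OF law_M12_M23_indep_Alice[of x y x''], of "map_pmf snd"]
      arg_cong[OF law_M23_M31_indep_inputs[OF x''], of "map_pmf fst"]
    by (simp add: map_pmf_comp)
qed

lemma law_M31: "map_pmf M31 (run_pmf P x y) = map_pmf M31 (run_pmf P x' y')"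
proof -
  obtain y'' where y'': "f x y'' = f x' y'"
    using bij_row[of x] by (metis bij_pointE)
  show ?thesis
    using arg_cong[OF law_M12_M31_indep_Bob[of x y y''], of "map_pmf snd"]
      arg_cong[OF law_M23_M31_indep_inputs[OF y''], of "map_pmf snd"]
    by (simp add: map_pmf_comp)
qed

lemma run_eq_if_transcripts_eq:
  assumes "r \<in> set_pmf (run_pmf P x y)" "r' \<in> set_pmf (run_pmf P x' y')"
    and "M12 r = M12 r'" "M23 r = M23 r'" "M31 r = M31 r'"
  shows "r = r'"
proof (rule complete_run_eq_if_tr_eq)
  fix l show "tr (hist l r) = tr (hist l r')"
    using assms(3-5) by (cases l) (simp_all add: hist_links M12_def M23_def M31_def)
qed (use assms(1,2) in \<open>auto simp: set_pmf_run\<close>)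

lemma card_mult_pmf_M12_le: "real CARD('x) * pmf (map_pmf M12 (run_pmf P x0 y0)) m \<le> 1"
proof -
  fix z :: 'z
  define partner where "partner x = inv (f x) z" for x
  have f_partner: "f x (partner x) = z" for x
    using bij_row[of x] by (simp add: partner_def bij_is_surj surj_f_inv_f)
  show ?thesis
  proof (rule card_mult_prob_le_1[where K="\<lambda>x. run_pmf P x (partner x)"
        and V="\<lambda>r. (M23 r, M31 r)" and S="M12 -` {m}"])
    show "map_pmf (\<lambda>r. (M23 r, M31 r)) (run_pmf P i (partner i))
        = map_pmf (\<lambda>r. (M23 r, M31 r)) (run_pmf P j (partner j))" for i j
      by (rule law_M23_M31_indep_inputs) (simp add: f_partner)
  next
    fix i j r r'
    assume r: "r \<in> set_pmf (run_pmf P i (partner i)) \<inter> M12 -` {m}"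
      and r': "r' \<in> set_pmf (run_pmf P j (partner j)) \<inter> M12 -` {m}"
      and "(M23 r, M31 r) = (M23 r', M31 r')"
    then have "r' = r" using run_eq_if_transcripts_eq by auto
    then have "r \<in> set_pmf (run_pmf P i (partner j))" "r \<in> set_pmf (run_pmf P j (partner j))"
      using r r' by (auto simp: set_pmf_run intro: run_prob_pos_mix)
    then have "f i (partner j) = f j (partner j)"
      using outZ_run by metis
    then show "i = j" using bij_col[of "partner j"] by (auto simp: bij_def inj_def)
  next
    show "measure_pmf.prob (run_pmf P i (partner i)) (M12 -` {m})
        = pmf (map_pmf M12 (run_pmf P x0 y0)) m" for i
      using law_M12[of i "partner i" x0 y0] by (metis pmf_map)
  qed
qed

lemma card_mult_pmf_M23_le: "real CARD('y) * pmf (map_pmf M23 (run_pmf P x0 y0)) m \<le> 1"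
proof (rule card_mult_prob_le_1[where K="run_pmf P x0" and V="\<lambda>r. (M12 r, M31 r)" and S="M23 -` {m}"])
  fix i j r r'
  assume r: "r \<in> set_pmf (run_pmf P x0 i) \<inter> M23 -` {m}"
    and r': "r' \<in> set_pmf (run_pmf P x0 j) \<inter> M23 -` {m}"
    and "(M12 r, M31 r) = (M12 r', M31 r')"
  then have "r' = r" using run_eq_if_transcripts_eq by auto
  then have "f x0 i = f x0 j" using r r' outZ_run by (metis IntD1)
  then show "i = j" using bij_row[of x0] by (auto simp: bij_def inj_def)
next
  show "measure_pmf.prob (run_pmf P x0 i) (M23 -` {m}) = pmf (map_pmf M23 (run_pmf P x0 y0)) m" for i
    using law_M23[of x0 i x0 y0] by (metis pmf_map)
qed (rule law_M12_M31_indep_Bob)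

lemma card_mult_pmf_M31_le: "real CARD('x) * pmf (map_pmf M31 (run_pmf P x0 y0)) m \<le> 1"
proof (rule card_mult_prob_le_1[where K="\<lambda>x. run_pmf P x y0" and V="\<lambda>r. (M12 r, M23 r)"
      and S="M31 -` {m}"])
  fix i j r r'
  assume r: "r \<in> set_pmf (run_pmf P i y0) \<inter> M31 -` {m}"
    and r': "r' \<in> set_pmf (run_pmf P j y0) \<inter> M31 -` {m}"
    and "(M12 r, M23 r) = (M12 r', M23 r')"
  then have "r' = r" using run_eq_if_transcripts_eq by auto
  then have "f i y0 = f j y0" using r r' outZ_run by (metis IntD1)
  then show "i = j" using bij_col[of y0] by (auto simp: bij_def inj_def)
next
  show "measure_pmf.prob (run_pmf P i y0) (M31 -` {m}) = pmf (map_pmf M31 (run_pmf P x0 y0)) m" for i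
    using law_M31[of i y0 x0 y0] by (metis pmf_map)
qed (rule law_M12_M23_indep_Alice)

lemma card_y_eq_card_x: "CARD('y) = CARD('x)"
proof -
  fix x y
  have "CARD('y) = CARD('z)" "CARD('x) = CARD('z)"
    using bij_betw_same_card[OF bij_row[of x]] bij_betw_same_card[OF bij_col[of y]] by simp_all
  then show ?thesis by simp
qed

lemma one_le_card_x: "1 \<le> real CARD('x)"
  by (simp add: Suc_le_eq card_gt_0_iff)

lemma H_M12_ge: "ennreal (log 2 CARD('x)) \<le> H_M12 pXY P"
proof -
  fix x0 y0
  have "map_pmf (\<lambda>(x, y, r). M12 r) (joint pXY P) = map_pmf M12 (run_pmf P x0 y0)"
    by (rule map_joint_const) (rule law_M12)
  then show ?thesis
    unfolding H_M12_def using one_le_card_x card_mult_pmf_M12_le by (auto intro: entropy2_ge_log)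
qed

lemma H_M23_ge: "ennreal (log 2 CARD('x)) \<le> H_M23 pXY P"
proof -
  fix x0 y0
  have "map_pmf (\<lambda>(x, y, r). M23 r) (joint pXY P) = map_pmf M23 (run_pmf P x0 y0)"
    by (rule map_joint_const) (rule law_M23)
  then show ?thesis
    unfolding H_M23_def using one_le_card_x card_mult_pmf_M23_le card_y_eq_card_x
    by (auto intro: entropy2_ge_log)
qed

lemma H_M31_ge: "ennreal (log 2 CARD('x)) \<le> H_M31 pXY P"
proof -
  fix x0 y0
  have "map_pmf (\<lambda>(x, y, r). M31 r) (joint pXY P) = map_pmf M31 (run_pmf P x0 y0)"
    by (rule map_joint_const) (rule law_M31)
  then show ?thesis
    unfolding H_M31_def using one_le_card_x card_mult_pmf_M31_le by (auto intro: entropy2_ge_log)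
qed

lemma views_entropy_ge: "ennreal (log 2 CARD('x)) \<le> views_entropy pXY P"
proof -
  define W where "W u r = ((fst u, M12 r, M31 r), (snd u, M12 r, M23 r), (M23 r, M31 r, outZ P r))"
    for u :: "'x \<times> 'y" and r
  define J where "J = bind_pmf pXY (\<lambda>u. map_pmf (\<lambda>w. (w, u)) (map_pmf (W u) (run_pmf P (fst u) (snd u))))"
  have joint_views: "map_pmf (\<lambda>(x, y, r). (((x, M12 r, M31 r), (y, M12 r, M23 r),
      (M23 r, M31 r, outZ P r)), (x, y))) (joint pXY P) = J"
    by (simp add: map_joint J_def W_def map_pmf_comp)
  have marginal: "map_pmf snd J = pXY"
    by (simp add: J_def map_bind_pmf map_pmf_comp bind_return_pmf')
  have "real CARD('x) * pmf J (w, u) \<le> pmf pXY u" for w u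
  proof -
    define K where "K = run_pmf P (fst u) (snd u)"
    have "pmf J (w, u) = pmf pXY u * pmf (map_pmf (W u) K) w"
      unfolding J_def K_def by (rule pmf_bind_inj_tag) (simp add: inj_def)
    also have "\<dots> \<le> pmf pXY u * pmf (map_pmf M12 K) (fst (snd (fst w)))"
      by (intro mult_left_mono pmf_map_le_pmf_map_factor) (simp_all add: W_def)
    finally have "real CARD('x) * pmf J (w, u)
        \<le> pmf pXY u * (real CARD('x) * pmf (map_pmf M12 K) (fst (snd (fst w))))"
      by (simp add: mult_left_mono ac_simps)
    also have "\<dots> \<le> pmf pXY u"
      using mult_left_mono[OF card_mult_pmf_M12_le pmf_nonneg] unfolding K_def by simp
    finally show ?thesis .
  qed
  then show ?thesis
    unfolding views_entropy_def joint_views using one_le_card_x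
    by (intro cond_entropy2_ge_log) (auto simp: marginal)
qed

end

lemma bij_pointwise_add_left: "bij (\<lambda>y. \<lambda>i. x i + y i :: 'g::group_add)"
  by (rule o_bij[of "\<lambda>z i. - x i + z i"]) (auto simp: fun_eq_iff add.assoc[symmetric])

lemma bij_pointwise_add_right: "bij (\<lambda>x. \<lambda>i. x i + y i :: 'g::group_add)"
  by (rule o_bij[of "\<lambda>z i. z i - y i"]) (auto simp: fun_eq_iff)

theorem theorem13:
  fixes pXY :: "(('n::finite \<Rightarrow> 'g::{group_add, finite}) \<times> ('n \<Rightarrow> 'g)) pmf"
  assumes "set_pmf pXY = UNIV"
  shows "(\<forall>P :: ('n \<Rightarrow> 'g, 'n \<Rightarrow> 'g, 'n \<Rightarrow> 'g) protocol.
            secure pXY (\<lambda>x y. \<lambda>i. x i + y i) P \<longrightarrow>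
              H_M12 pXY P \<ge> ennreal (real CARD('n) * log 2 (real CARD('g))) \<and>
              H_M23 pXY P \<ge> ennreal (real CARD('n) * log 2 (real CARD('g))) \<and>
              H_M31 pXY P \<ge> ennreal (real CARD('n) * log 2 (real CARD('g))))
         \<and> rho pXY (\<lambda>x y. \<lambda>i. x i + y i) \<ge> ennreal (real CARD('n) * log 2 (real CARD('g)))"
proof -
  have log_card: "log 2 (real CARD('n \<Rightarrow> 'g)) = real CARD('n) * log 2 (real CARD('g))"
    by (simp add: card_fun log_nat_power)
  have bounds: "ennreal (real CARD('n) * log 2 (real CARD('g))) \<le> H_M12 pXY P
      \<and> ennreal (real CARD('n) * log 2 (real CARD('g))) \<le> H_M23 pXY P
      \<and> ennreal (real CARD('n) * log 2 (real CARD('g))) \<le> H_M31 pXY P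
      \<and> ennreal (real CARD('n) * log 2 (real CARD('g))) \<le> views_entropy pXY P"
    if "secure pXY (\<lambda>x y. \<lambda>i. x i + y i) P" for P :: "('n \<Rightarrow> 'g, 'n \<Rightarrow> 'g, 'n \<Rightarrow> 'g) protocol"
  proof -
    interpret secure_latin_square_protocol pXY "\<lambda>x y. \<lambda>i. x i + y i" P
      using assms that bij_pointwise_add_left bij_pointwise_add_right by unfold_locales
    show ?thesis
      using H_M12_ge H_M23_ge H_M31_ge views_entropy_ge unfolding log_card by blast
  qed
  then show ?thesis
    unfolding rho_def by (auto intro!: INF_greatest)
qed

end
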